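(* Let $n>3$ be an integer. The inverse of the circulant matrix $\mathrm{circ}(3,1,0,\ldots,0,1)$ of order $n$ is \[[\mathrm{circ}(3,1,0,\ldots,0,1)]^{-1}=\mathrm{circ}(a_0,a_1,\ldots,a_{n-1}),\] where for $j=0,1,\ldots,n-1$, \[a_j=\frac{2^{n-j}}{\sqrt{5}}\left[\frac{(-3+\sqrt{5})^j}{2^n-(-3+\sqrt{5})^n}-\frac{(-3-\sqrt{5})^j}{2^n-(-3-\sqrt{5})^n}\right].\]
   Context: For $c_0,\dots,c_{k-1}$, $\mathrm{circ}(c_0,\ldots,c_{k-1})$ denotes the $k\times k$ circulant matrix whose $(i,j)$-entry is $c_{(j-i)\bmod k}$ (first row $c_0,\dots,c_{k-1}$, each subsequent row the cyclic right shift of the previous one). Thus $\mathrm{circ}(3,1,0,\ldots,0,1)$ has $3$ on the diagonal, $1$ on the two cyclically adjacent positions, and $0$ elsewhere. *)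

theory Defs
  imports "Jordan_Normal_Form.Matrix"
begin

definition circ :: "(nat \<Rightarrow> 'a) \<Rightarrow> nat \<Rightarrow> 'a mat" where
  "circ c k = mat k k (\<lambda>(i, j). c ((j + k - i) mod k))"

definition circ311 :: "nat \<Rightarrow> real mat" where
  "circ311 n = circ (\<lambda>j. if j = 0 then 3 else if j = 1 \<or> j = n - 1 then 1 else 0) n"

end

theory Submission
  imports Defs
begin

text \<open>Circulant matrices of order \<open>n\<close> multiply by cyclic convolution of their first rows, and
  they commute. So it suffices to find a first row \<open>b\<close> with
  \<open>c * b m + b (m - 1) + b (m + 1) = (if m = 0 then 1 else 0)\<close>, indices taken mod \<open>n\<close>.
  For a root \<open>r\<close> of \<open>x\<^sup>2 + c * x + 1\<close> the sequence \<open>r ^ j / (1 - r ^ n)\<close> satisfies the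
  three-term recurrence and loses exactly \<open>r ^ j\<close> when \<open>j\<close> is shifted by \<open>n\<close>. Dividing the
  difference of the two such sequences by \<open>r\<^sub>1 - r\<^sub>2\<close> makes the wrap-around at \<open>m = n - 1\<close>
  harmless and leaves defect exactly \<open>1\<close> at \<open>m = 0\<close>. For \<open>c = 3\<close> the roots are
  \<open>(-3 \<plusminus> sqrt 5) / 2\<close>, and the stated \<open>a\<^sub>j\<close> is this sequence with a factor \<open>2 ^ n\<close>
  cleared.\<close>

text \<open>The cyclic difference \<open>x - y\<close> of indices is written \<open>(x + n - y) mod n\<close> on \<open>nat\<close>, as in
  \<open>circ\<close>; identities between such indices are proved by passing to \<open>int\<close>, where subtraction
  does not truncate.\<close>

lemma int_mod_add_diff:
  fixes x y n :: nat
  assumes "y < n"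
  shows "int ((x + n - y) mod n) = (int x - int y) mod int n"
proof -
  have "int (x + n - y) = (int x - int y) + int n" using assms by simp
  then show ?thesis by (simp add: zmod_int)
qed

lemma mod_add_diff_cancel:
  fixes i l n :: nat
  assumes "i < n" "l < n"
  shows "((l + i) mod n + n - i) mod n = l"
proof -
  have "int (((l + i) mod n + n - i) mod n) = int l"
    using assms unfolding int_mod_add_diff[OF assms(1)] by (simp add: zmod_int mod_diff_left_eq)
  then show ?thesis by simp
qed

lemma mod_diff_add_cancel:
  fixes i k n :: nat
  assumes "i < n" "k < n"
  shows "((k + n - i) mod n + i) mod n = k"
proof -
  have "int (((k + n - i) mod n + i) mod n) = int k"
    using assms unfolding zmod_int[of "(k + n - i) mod n + i"] of_nat_add int_mod_add_diff[OF assms(1)]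
    by (simp add: mod_add_left_eq)
  then show ?thesis by simp
qed

lemma bij_betw_rotate:
  fixes i n :: nat
  assumes "i < n"
  shows "bij_betw (\<lambda>l. (l + i) mod n) {..<n} {..<n}"
  by (rule bij_betwI[where g = "\<lambda>k. (k + n - i) mod n"])
    (use assms in \<open>auto simp: mod_add_diff_cancel mod_diff_add_cancel\<close>)

lemma mod_reflect_involutive:
  fixes l m n :: nat
  assumes "l < n"
  shows "(m + n - (m + n - l) mod n) mod n = l"
proof -
  have "(m + n - l) mod n < n" using assms by simp
  then have "int ((m + n - (m + n - l) mod n) mod n) = (int m - int ((m + n - l) mod n)) mod int n"
    by (rule int_mod_add_diff)
  also have "\<dots> = int l"
    unfolding int_mod_add_diff[OF assms] using assms by (simp add: mod_diff_right_eq)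
  finally show ?thesis by simp
qed

lemma bij_betw_reflect:
  fixes m n :: nat
  shows "bij_betw (\<lambda>l. (m + n - l) mod n) {..<n} {..<n}"
  by (rule bij_betwI[where g = "\<lambda>l. (m + n - l) mod n"]) (auto simp: mod_reflect_involutive)

lemma mod_add_diff_mod:
  fixes i j l n :: nat
  assumes "i < n" "l < n"
  shows "(j + n - (l + i) mod n) mod n = ((j + n - i) mod n + n - l) mod n"
proof -
  have "(l + i) mod n < n" using assms by simp
  then have "int ((j + n - (l + i) mod n) mod n) = (int j - (int l + int i) mod int n) mod int n"
    unfolding int_mod_add_diff[OF \<open>(l + i) mod n < n\<close>]
    unfolding zmod_int of_nat_add by simp
  also have "\<dots> = ((int j - int i) mod int n - int l) mod int n"
    by (simp add: mod_diff_left_eq mod_diff_right_eq algebra_simps)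
  also have "\<dots> = int (((j + n - i) mod n + n - l) mod n)"
    by (simp only: int_mod_add_diff[OF assms(2)] int_mod_add_diff[OF assms(1)])
  finally show ?thesis by simp
qed

definition circ_conv :: "nat \<Rightarrow> (nat \<Rightarrow> 'a) \<Rightarrow> (nat \<Rightarrow> 'a) \<Rightarrow> nat \<Rightarrow> 'a::semiring_0" where
  "circ_conv n c d m = (\<Sum>l<n. c l * d ((m + n - l) mod n))"

lemma circ_cong: "(\<And>j. j < n \<Longrightarrow> c j = d j) \<Longrightarrow> circ c n = circ d n"
  by (rule eq_matI) (simp_all add: circ_def)

lemma circ_delta_eq_one_mat: "circ (\<lambda>m. if m = 0 then 1 else 0) n = 1\<^sub>m n"
proof (rule eq_matI)
  fix i j assume "i < dim_row (1\<^sub>m n)" "j < dim_col (1\<^sub>m n)"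
  then have ij: "i < n" "j < n" by simp_all
  have "(j + n - i) mod n = 0 \<longleftrightarrow> i = j"
  proof (cases "i \<le> j")
    case True
    then have "j + n - i = (j - i) + n" by simp
    then have "(j + n - i) mod n = j - i" using ij by (simp only: mod_add_self2 mod_less less_imp_diff_less)
    with True show ?thesis by auto
  next
    case False
    then have "(j + n - i) mod n = j + n - i" using ij by simp
    with False ij show ?thesis by simp
  qed
  with ij show "circ (\<lambda>m. if m = 0 then 1 else 0) n $$ (i, j) = 1\<^sub>m n $$ (i, j)"
    by (simp add: circ_def)
qed (simp_all add: circ_def)

lemma mult_circ: "circ c n * circ d n = circ (circ_conv n c d) n"
proof (rule eq_matI)
  fix i j assume "i < dim_row (circ (circ_conv n c d) n)" "j < dim_col (circ (circ_conv n c d) n)"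
  then have ij: "i < n" "j < n" by (simp_all add: circ_def)
  have "(circ c n * circ d n) $$ (i, j) = (\<Sum>k<n. c ((k + n - i) mod n) * d ((j + n - k) mod n))"
    using ij by (simp add: circ_def scalar_prod_def atLeast0LessThan)
  also have "\<dots> = (\<Sum>l<n. c (((l + i) mod n + n - i) mod n) * d ((j + n - (l + i) mod n) mod n))"
    by (rule sum.reindex_bij_betw[OF bij_betw_rotate[OF ij(1)], symmetric])
  also have "\<dots> = circ_conv n c d ((j + n - i) mod n)"
    unfolding circ_conv_def using ij by (simp add: mod_add_diff_cancel mod_add_diff_mod)
  finally show "(circ c n * circ d n) $$ (i, j) = circ (circ_conv n c d) n $$ (i, j)"
    using ij by (simp add: circ_def)
qed (simp_all add: circ_def)

lemma circ_conv_commute: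
  fixes c d :: "nat \<Rightarrow> 'a::comm_semiring_0"
  shows "circ_conv n c d = circ_conv n d c"
proof
  fix m
  have "circ_conv n c d m = (\<Sum>l<n. c ((m + n - (m + n - l) mod n) mod n) * d ((m + n - l) mod n))"
    unfolding circ_conv_def by (intro sum.cong refl) (simp add: mod_reflect_involutive)
  also have "\<dots> = (\<Sum>l<n. c ((m + n - l) mod n) * d l)"
    by (rule sum.reindex_bij_betw[OF bij_betw_reflect, of "\<lambda>k. c ((m + n - k) mod n) * d k"])
  finally show "circ_conv n c d m = circ_conv n d c m" by (simp add: circ_conv_def mult.commute)
qed

lemma circ_commute:
  fixes c d :: "nat \<Rightarrow> 'a::comm_semiring_0"
  shows "circ c n * circ d n = circ d n * circ c n"
  unfolding mult_circ circ_conv_commute[of n c d] ..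

definition tridiag_seq :: "'a \<Rightarrow> nat \<Rightarrow> nat \<Rightarrow> 'a::zero_neq_one" where
  "tridiag_seq c n j = (if j = 0 then c else if j = 1 \<or> j = n - 1 then 1 else 0)"

lemma circ_conv_tridiag_seq:
  fixes d :: "nat \<Rightarrow> 'a::semiring_1"
  assumes "n \<ge> 3" "m < n"
  shows "circ_conv n (tridiag_seq c n) d m = c * d m + d ((m + n - 1) mod n) + d ((m + 1) mod n)"
proof -
  have "circ_conv n (tridiag_seq c n) d m = (\<Sum>l\<in>{0, 1, n - 1}. tridiag_seq c n l * d ((m + n - l) mod n))"
    unfolding circ_conv_def using assms by (intro sum.mono_neutral_right) (auto simp: tridiag_seq_def)
  also have "\<dots> = c * d m + d ((m + n - 1) mod n) + d ((m + 1) mod n)"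
    using assms by (simp add: tridiag_seq_def algebra_simps)
  finally show ?thesis .
qed

lemma cyclic_three_term_identity:
  fixes b :: "nat \<Rightarrow> 'a::comm_ring_1"
  assumes "n \<ge> 2" "m < n"
    and recurrence: "\<And>j. b (j + 2) + c * b (j + 1) + b j = 0"
    and period: "b n = b 0"
    and initial: "b 1 + c * b 0 + b (n - 1) = 1"
  shows "c * b m + b ((m + n - 1) mod n) + b ((m + 1) mod n) = (if m = 0 then 1 else 0)"
proof (cases "m = 0")
  case True
  with assms(1) initial show ?thesis by (simp add: algebra_simps)
next
  case False
  then obtain k where m: "m = k + 1" by (metis Suc_eq_plus1 not0_implies_Suc)
  have "(m + n - 1) mod n = k" using assms(2) m by simp
  moreover have "b ((m + 1) mod n) = b (k + 2)"
  proof (cases "m + 1 < n")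
    case False
    then have "m + 1 = n" using assms(2) by simp
    with period m show ?thesis by simp
  qed (use m in simp)
  ultimately show ?thesis using recurrence[of k] False m by (simp add: algebra_simps)
qed

theorem circ_tridiag_inverse:
  fixes b :: "nat \<Rightarrow> 'a::comm_ring_1"
  assumes "n \<ge> 3"
    and "\<And>j. b (j + 2) + c * b (j + 1) + b j = 0"
    and "b n = b 0"
    and "b 1 + c * b 0 + b (n - 1) = 1"
  shows "circ (tridiag_seq c n) n * circ b n = 1\<^sub>m n"
    and "circ b n * circ (tridiag_seq c n) n = 1\<^sub>m n"
proof -
  have "circ (tridiag_seq c n) n * circ b n = circ (\<lambda>m. if m = 0 then 1 else 0) n"
    unfolding mult_circ
  proof (rule circ_cong)
    fix m assume "m < n"
    with assms show "circ_conv n (tridiag_seq c n) b m = (if m = 0 then 1 else 0)"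
      by (simp only: circ_conv_tridiag_seq cyclic_three_term_identity)
  qed
  then show "circ (tridiag_seq c n) n * circ b n = 1\<^sub>m n"
    by (simp add: circ_delta_eq_one_mat)
  then show "circ b n * circ (tridiag_seq c n) n = 1\<^sub>m n"
    by (simp add: circ_commute)
qed

text \<open>For \<open>|r| < 1\<close> this is \<open>\<Sum>k. r ^ (j + k * n)\<close>, the \<open>n\<close>-periodization of the geometric
  sequence; hence \<open>cyclic_geom_add_period\<close>.\<close>

definition cyclic_geom :: "nat \<Rightarrow> 'a \<Rightarrow> nat \<Rightarrow> 'a::field" where
  "cyclic_geom n r j = r ^ j / (1 - r ^ n)"

lemma cyclic_geom_recurrence:
  fixes r c :: "'a::field"
  assumes "r\<^sup>2 + c * r + 1 = 0"
  shows "cyclic_geom n r (j + 2) + c * cyclic_geom n r (j + 1) + cyclic_geom n r j = 0"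
proof -
  have "cyclic_geom n r (j + 2) + c * cyclic_geom n r (j + 1) + cyclic_geom n r j
      = r ^ j * (r\<^sup>2 + c * r + 1) / (1 - r ^ n)"
    by (simp add: cyclic_geom_def add_divide_distrib power_add power2_eq_square algebra_simps)
  with assms show ?thesis by simp
qed

lemma cyclic_geom_add_period:
  fixes r :: "'a::field"
  assumes "r ^ n \<noteq> 1"
  shows "cyclic_geom n r (j + n) = cyclic_geom n r j - r ^ j"
proof -
  have "1 - r ^ n \<noteq> 0" using assms by simp
  then show ?thesis by (simp add: cyclic_geom_def power_add field_simps)
qed

lemma cyclic_geom_initial:
  fixes r c :: "'a::field"
  assumes "r\<^sup>2 + c * r + 1 = 0" "r ^ n \<noteq> 1" "n \<ge> 1"
  shows "cyclic_geom n r 1 + c * cyclic_geom n r 0 + cyclic_geom n r (n - 1) = r + c"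
proof -
  have "n - 1 + 2 = 1 + n" "n - 1 + 1 = 0 + n" using assms(3) by simp_all
  then have "cyclic_geom n r 1 + c * cyclic_geom n r 0 + cyclic_geom n r (n - 1) - (r + c)
      = cyclic_geom n r (n - 1 + 2) + c * cyclic_geom n r (n - 1 + 1) + cyclic_geom n r (n - 1)"
    by (simp only: cyclic_geom_add_period[OF assms(2)]) (simp add: algebra_simps)
  also have "\<dots> = 0" by (rule cyclic_geom_recurrence[OF assms(1)])
  finally show ?thesis by simp
qed

lemma cyclic_geom_scale:
  fixes x r :: "'a::field"
  assumes "x \<noteq> 0" "j \<le> n"
  shows "x ^ (n - j) * (x * r) ^ j / (x ^ n - (x * r) ^ n) = cyclic_geom n r j"
proof -
  have "x ^ (n - j) * (x * r) ^ j = x ^ n * r ^ j"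
    using assms(2) by (simp add: power_mult_distrib mult.assoc[symmetric] power_add[symmetric])
  moreover have "x ^ n - (x * r) ^ n = x ^ n * (1 - r ^ n)"
    by (simp add: power_mult_distrib algebra_simps)
  ultimately show ?thesis using assms(1) by (simp add: cyclic_geom_def)
qed

theorem circ_tridiag_inverse_roots:
  fixes r1 r2 c :: "'a::field"
  assumes "n \<ge> 3"
    and roots: "r1\<^sup>2 + c * r1 + 1 = 0" "r2\<^sup>2 + c * r2 + 1 = 0" "r1 \<noteq> r2"
    and not_unit: "r1 ^ n \<noteq> 1" "r2 ^ n \<noteq> 1"
  defines "b \<equiv> \<lambda>j. (cyclic_geom n r1 j - cyclic_geom n r2 j) / (r1 - r2)"
  shows "circ (tridiag_seq c n) n * circ b n = 1\<^sub>m n"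
    and "circ b n * circ (tridiag_seq c n) n = 1\<^sub>m n"
proof -
  have "n \<ge> 1" using assms(1) by simp
  have b_combination: "b i + c * b j + b k
      = ((cyclic_geom n r1 i + c * cyclic_geom n r1 j + cyclic_geom n r1 k)
         - (cyclic_geom n r2 i + c * cyclic_geom n r2 j + cyclic_geom n r2 k)) / (r1 - r2)" for i j k
    unfolding b_def by (simp add: add_divide_distrib diff_divide_distrib algebra_simps)
  have "b (j + 2) + c * b (j + 1) + b j = 0" for j
    unfolding b_combination cyclic_geom_recurrence[OF roots(1)] cyclic_geom_recurrence[OF roots(2)] by simp
  moreover have "b n = b 0"
    using cyclic_geom_add_period[OF not_unit(1), of 0] cyclic_geom_add_period[OF not_unit(2), of 0]
    unfolding b_def by simp
  moreover have "b 1 + c * b 0 + b (n - 1) = 1"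
    using roots(3) unfolding b_combination
      cyclic_geom_initial[OF roots(1) not_unit(1) \<open>n \<ge> 1\<close>] cyclic_geom_initial[OF roots(2) not_unit(2) \<open>n \<ge> 1\<close>]
    by simp
  ultimately show "circ (tridiag_seq c n) n * circ b n = 1\<^sub>m n"
    and "circ b n * circ (tridiag_seq c n) n = 1\<^sub>m n"
    using circ_tridiag_inverse[OF assms(1)] by blast+
qed

lemma root_pow_ne_one:
  fixes r c :: real
  assumes "r\<^sup>2 + c * r + 1 = 0" "\<bar>c\<bar> \<noteq> 2" "n > 0"
  shows "r ^ n \<noteq> 1"
proof
  assume "r ^ n = 1"
  then have "\<bar>r\<bar> = 1" using power_eq_1_iff[of r n] assms(3) by auto
  then have "r = 1 \<or> r = -1" by auto
  with assms(1,2) show False by auto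
qed

theorem mainTheorem3:
  fixes n :: nat
  assumes "n > 3"
  defines "a \<equiv> (\<lambda>j::nat. (2::real) ^ (n - j) / sqrt 5 *
      ((-3 + sqrt 5) ^ j / (2 ^ n - (-3 + sqrt 5) ^ n)
       - (-3 - sqrt 5) ^ j / (2 ^ n - (-3 - sqrt 5) ^ n)))"
  shows "circ311 n * circ a n = 1\<^sub>m n \<and> circ a n * circ311 n = 1\<^sub>m n"
proof -
  define r1 :: real where "r1 = (-3 + sqrt 5) / 2"
  define r2 :: real where "r2 = (-3 - sqrt 5) / 2"
  have roots: "r1\<^sup>2 + 3 * r1 + 1 = 0" "r2\<^sup>2 + 3 * r2 + 1 = 0"
    by (simp_all add: r1_def r2_def power2_eq_square field_simps)
  have diff: "r1 - r2 = sqrt 5" by (simp add: r1_def r2_def field_simps)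
  have "circ a n = circ (\<lambda>j. (cyclic_geom n r1 j - cyclic_geom n r2 j) / (r1 - r2)) n"
  proof (rule circ_cong)
    fix j assume "j < n"
    have "-3 + sqrt 5 = 2 * r1" "-3 - sqrt 5 = 2 * r2" by (simp_all add: r1_def r2_def)
    then have "a j = (2 ^ (n - j) * (2 * r1) ^ j / (2 ^ n - (2 * r1) ^ n)
        - 2 ^ (n - j) * (2 * r2) ^ j / (2 ^ n - (2 * r2) ^ n)) / sqrt 5"
      unfolding a_def by (simp add: right_diff_distrib diff_divide_distrib ac_simps)
    also have "\<dots> = (cyclic_geom n r1 j - cyclic_geom n r2 j) / (r1 - r2)"
      using \<open>j < n\<close> unfolding diff by (subst (1 2) cyclic_geom_scale) simp_all
    finally show "a j = (cyclic_geom n r1 j - cyclic_geom n r2 j) / (r1 - r2)" .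
  qed
  moreover have "circ311 n = circ (tridiag_seq 3 n) n"
    unfolding circ311_def tridiag_seq_def[abs_def] ..
  moreover have "r1 \<noteq> r2" "r1 ^ n \<noteq> 1" "r2 ^ n \<noteq> 1"
    using diff root_pow_ne_one[OF roots(1)] root_pow_ne_one[OF roots(2)] assms(1) by auto
  ultimately show ?thesis
    using circ_tridiag_inverse_roots[OF _ roots] assms(1) by simp
qed

end
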